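(* Let $G$ be a $\mathbb{Q}$-group. Then for every $m\ge1$ and every $w\in F_m\setminus[F_m,F_m]$, the word map $w\colon G^m\to G$ is surjective.
   Context: A $\mathbb{Q}$-group is a group together with a map $G\times\mathbb{Q}\to G$, $(g,a)\mapsto g^a$, such that for all $g,h\in G$, $a,b\in\mathbb{Q}$: $g^0=e$, $g^1=g$, $e^a=e$; $g^{a+b}=g^ag^b$, $(g^a)^b=g^{ab}$; $(hgh^{-1})^a=hg^ah^{-1}$; and if $gh=hg$ then $(gh)^a=g^ah^a$. $F_m$ is the free group on $x_1,\dots,x_m$, and $w\in F_m$ defines the word map $G^m\to G$ obtained by substituting $x_i\mapsto g_i$. *)

theory Defs
  imports "HOL-Algebra.Algebra"
begin

definition Q_group :: "('g, 'b) monoid_scheme \<Rightarrow> ('g \<Rightarrow> rat \<Rightarrow> 'g) \<Rightarrow> bool" where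
  "Q_group G pw \<longleftrightarrow> group G \<and>
     (\<forall>g\<in>carrier G. \<forall>a. pw g a \<in> carrier G) \<and>
     (\<forall>g\<in>carrier G. pw g 0 = \<one>\<^bsub>G\<^esub>) \<and>
     (\<forall>g\<in>carrier G. pw g 1 = g) \<and>
     (\<forall>a. pw \<one>\<^bsub>G\<^esub> a = \<one>\<^bsub>G\<^esub>) \<and>
     (\<forall>g\<in>carrier G. \<forall>a b. pw g (a + b) = pw g a \<otimes>\<^bsub>G\<^esub> pw g b) \<and>
     (\<forall>g\<in>carrier G. \<forall>a b. pw (pw g a) b = pw g (a * b)) \<and>
     (\<forall>g\<in>carrier G. \<forall>h\<in>carrier G. \<forall>a.
        pw (h \<otimes>\<^bsub>G\<^esub> g \<otimes>\<^bsub>G\<^esub> inv\<^bsub>G\<^esub> h) a = h \<otimes>\<^bsub>G\<^esub> pw g a \<otimes>\<^bsub>G\<^esub> inv\<^bsub>G\<^esub> h) \<and>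
     (\<forall>g\<in>carrier G. \<forall>h\<in>carrier G. \<forall>a.
        g \<otimes>\<^bsub>G\<^esub> h = h \<otimes>\<^bsub>G\<^esub> g \<longrightarrow> pw (g \<otimes>\<^bsub>G\<^esub> h) a = pw g a \<otimes>\<^bsub>G\<^esub> pw h a)"

text \<open>Letters are pairs (i, b): (i, False) stands for x_i and (i, True) for x_i^{-1}.
Group words are lists of letters.\<close>

type_synonym letter = "nat \<times> bool"

definition word_over :: "nat \<Rightarrow> letter list \<Rightarrow> bool" where
  "word_over m w \<longleftrightarrow> (\<forall>l\<in>set w. fst l < m)"

definition free_red :: "(letter list \<times> letter list) set" where
  "free_red = {(xs @ [(i, b), (i, \<not> b)] @ ys, xs @ ys) | xs ys i b. True}"

definition free_equiv :: "(letter list \<times> letter list) set" where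
  "free_equiv = (free_red \<union> free_red\<inverse>)\<^sup>*"

text \<open>The free group on x_1..x_m (indexed 0..m-1): equivalence classes of words over m
letters, with concatenation of representatives as multiplication.\<close>
definition free_group :: "nat \<Rightarrow> letter list set monoid" where
  "free_group m = \<lparr> carrier = (\<lambda>w. free_equiv `` {w}) ` {w. word_over m w},
                    monoid.mult = (\<lambda>A B. free_equiv `` {(SOME a. a \<in> A) @ (SOME b. b \<in> B)}),
                    monoid.one = free_equiv `` {[]} \<rparr>"

fun eval_word :: "('g, 'b) monoid_scheme \<Rightarrow> (nat \<Rightarrow> 'g) \<Rightarrow> letter list \<Rightarrow> 'g" where
  "eval_word G g [] = \<one>\<^bsub>G\<^esub>"
| "eval_word G g ((i, b) # w) =
     (if b then inv\<^bsub>G\<^esub> (g i) else g i) \<otimes>\<^bsub>G\<^esub> eval_word G g w"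

definition word_map :: "('g, 'b) monoid_scheme \<Rightarrow> nat \<Rightarrow> letter list set \<Rightarrow> (nat \<Rightarrow> 'g) \<Rightarrow> 'g" where
  "word_map G m W g = eval_word G g (SOME w. w \<in> W \<and> word_over m w)"

end

theory Submission
  imports Defs
begin

text \<open>A word w outside the commutator subgroup has some nonzero exponent sum e in a
variable x_i: a word all of whose exponent sums vanish can be reduced letter by letter
to the empty word modulo commutators. Substituting 1 for the other variables turns the
word map into g \<mapsto> g^e, and in a Q-group every h is the e-th power of h^(1/e).\<close>

fun exp_sum :: "nat \<Rightarrow> letter list \<Rightarrow> int" where
  "exp_sum i [] = 0"
| "exp_sum i ((j, b) # w) = (if j = i then (if b then -1 else 1) else 0) + exp_sum i w"

lemma exp_sum_append: "exp_sum i (u @ v) = exp_sum i u + exp_sum i v"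
  by (induction u rule: exp_sum.induct) auto

lemma exp_sum_nonneg: "(i, True) \<notin> set w \<Longrightarrow> exp_sum i w \<ge> 0"
  by (induction w rule: exp_sum.induct) auto

lemma exp_sum_nonpos: "(i, False) \<notin> set w \<Longrightarrow> exp_sum i w \<le> 0"
  by (induction w rule: exp_sum.induct) auto

definition word_inv :: "letter list \<Rightarrow> letter list" where
  "word_inv u = rev (map (\<lambda>(i, b). (i, \<not> b)) u)"

lemma exp_sum_word_inv: "exp_sum i (word_inv u) = - exp_sum i u"
  by (induction u rule: exp_sum.induct) (auto simp: word_inv_def exp_sum_append)

lemma word_over_append: "word_over m (u @ v) \<longleftrightarrow> word_over m u \<and> word_over m v"
  unfolding word_over_def by auto

lemma word_over_word_inv: "word_over m u \<Longrightarrow> word_over m (word_inv u)"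
  unfolding word_over_def word_inv_def by auto

lemma equiv_free_equiv: "equiv UNIV free_equiv"
  unfolding free_equiv_def
  by (intro equivI refl_rtrancl trans_rtrancl sym_rtrancl) (auto simp: sym_def)

lemma free_red_append_cong: "(u, v) \<in> free_red \<Longrightarrow> (xs @ u @ ys, xs @ v @ ys) \<in> free_red"
  unfolding free_red_def by auto (metis append.assoc)

lemma free_equiv_append_cong:
  "(u, v) \<in> free_equiv \<Longrightarrow> (xs @ u @ ys, xs @ v @ ys) \<in> free_equiv"
  unfolding free_equiv_def
proof (induction rule: rtrancl_induct)
  case (step y z)
  then have "(xs @ y @ ys, xs @ z @ ys) \<in> free_red \<union> free_red\<inverse>"
    using free_red_append_cong[of y z xs ys] free_red_append_cong[of z y xs ys] by auto
  with step.IH show ?case by (rule rtrancl_into_rtrancl)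
qed simp

lemma word_inv_append_free_equiv: "(word_inv u @ u, []) \<in> free_equiv"
proof (induction u)
  case Nil
  then show ?case by (simp add: word_inv_def free_equiv_def)
next
  case (Cons l u)
  obtain i b where l: "l = (i, b)" by fastforce
  have "(word_inv u @ [(i, \<not> b), (i, \<not> \<not> b)] @ u, word_inv u @ u) \<in> free_red"
    unfolding free_red_def by blast
  then have "(word_inv (l # u) @ l # u, word_inv u @ u) \<in> free_equiv"
    unfolding free_equiv_def l word_inv_def by auto
  with Cons.IH show ?case
    using equiv_free_equiv unfolding equiv_def trans_def by blast
qed

definition free_class :: "letter list \<Rightarrow> letter list set" where
  "free_class w = free_equiv `` {w}"

lemma free_class_self: "w \<in> free_class w"
  unfolding free_class_def free_equiv_def by simp

lemma free_class_eq: "(u, v) \<in> free_equiv \<Longrightarrow> free_class u = free_class v"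
  unfolding free_class_def using equiv_free_equiv by (simp add: equiv_class_eq)

lemma carrier_free_group: "carrier (free_group m) = free_class ` {w. word_over m w}"
  unfolding free_group_def free_class_def by simp

lemma one_free_group: "\<one>\<^bsub>free_group m\<^esub> = free_class []"
  unfolding free_group_def free_class_def by simp

lemma mult_free_group: "free_class u \<otimes>\<^bsub>free_group m\<^esub> free_class v = free_class (u @ v)"
proof -
  let ?a = "SOME a. a \<in> free_class u" and ?b = "SOME b. b \<in> free_class v"
  have "?a \<in> free_class u" "?b \<in> free_class v"
    by (rule someI, rule free_class_self)+
  then have "(u, ?a) \<in> free_equiv" "(v, ?b) \<in> free_equiv"
    unfolding free_class_def by auto
  then have "(u @ v, ?a @ v) \<in> free_equiv" "(?a @ v, ?a @ ?b) \<in> free_equiv"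
    using free_equiv_append_cong[of u ?a "[]" v] free_equiv_append_cong[of v ?b ?a "[]"]
    by auto
  then have "free_class (?a @ ?b) = free_class (u @ v)"
    by (simp add: free_class_eq)
  then show ?thesis
    unfolding free_group_def by (simp add: free_class_def)
qed

lemma free_class_in_carrier: "word_over m w \<Longrightarrow> free_class w \<in> carrier (free_group m)"
  unfolding carrier_free_group by auto

lemma group_free_group: "group (free_group m)"
proof (rule groupI)
  fix x
  assume "x \<in> carrier (free_group m)"
  then obtain u where u: "word_over m u" "x = free_class u"
    unfolding carrier_free_group by auto
  then have "free_class (word_inv u) \<otimes>\<^bsub>free_group m\<^esub> x = \<one>\<^bsub>free_group m\<^esub>"
    by (simp add: mult_free_group one_free_group free_class_eq[OF word_inv_append_free_equiv])
  with u show "\<exists>y\<in>carrier (free_group m). y \<otimes>\<^bsub>free_group m\<^esub> x = \<one>\<^bsub>free_group m\<^esub>"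
    by (blast intro: free_class_in_carrier word_over_word_inv)
next
  fix x y
  assume "x \<in> carrier (free_group m)" "y \<in> carrier (free_group m)"
  then show "x \<otimes>\<^bsub>free_group m\<^esub> y \<in> carrier (free_group m)"
    unfolding carrier_free_group by (auto simp: mult_free_group word_over_append)
qed (auto simp: carrier_free_group one_free_group mult_free_group word_over_def)

lemma inv_free_group:
  assumes "word_over m u"
  shows "inv\<^bsub>free_group m\<^esub> free_class u = free_class (word_inv u)"
  using assms group.inv_equality[OF group_free_group]
  by (simp add: free_class_in_carrier word_over_word_inv mult_free_group one_free_group
      free_class_eq[OF word_inv_append_free_equiv])

lemma (in group) conj_mult_in_derived:
  assumes "a \<in> carrier G" "u \<in> carrier G" "v \<in> carrier G"
    and "u \<otimes> v \<in> derived G (carrier G)"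
  shows "a \<otimes> u \<otimes> inv a \<otimes> v \<in> derived G (carrier G)"
proof -
  have "a \<otimes> u \<otimes> inv a \<otimes> inv u \<in> derived G (carrier G)"
    unfolding derived_def using assms(1,2) by (blast intro: generate.incl)
  with assms(4) have "(a \<otimes> u \<otimes> inv a \<otimes> inv u) \<otimes> (u \<otimes> v) \<in> derived G (carrier G)"
    using subgroup.m_closed[OF derived_is_subgroup] by blast
  moreover have "inv u \<otimes> (u \<otimes> v) = v"
    using assms(2,3) by (simp flip: m_assoc)
  ultimately show ?thesis
    using assms(1-3) by (simp add: m_assoc)
qed

lemma free_class_in_derivedI:
  assumes "word_over m w" and "\<And>i. exp_sum i w = 0"
  shows "free_class w \<in> derived (free_group m) (carrier (free_group m))"
  using assms
proof (induction "length w" arbitrary: w rule: less_induct)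
  case less
  interpret F: group "free_group m" by (rule group_free_group)
  let ?D = "derived (free_group m) (carrier (free_group m))"
  show ?case
  proof (cases w)
    case Nil
    then show ?thesis
      using subgroup.one_closed[OF F.derived_is_subgroup] by (simp add: one_free_group)
  next
    case (Cons l rest)
    obtain i b where l: "l = (i, b)" by fastforce
    have "exp_sum i rest = (if b then 1 else -1)"
      using less.prems(2)[of i] Cons l by (cases b) auto
    then have "(i, \<not> b) \<in> set rest"
      using exp_sum_nonneg[of i rest] exp_sum_nonpos[of i rest] by (cases b) auto
    then obtain u v where rest: "rest = u @ (i, \<not> b) # v"
      by (meson split_list)
    have w: "w = [l] @ u @ word_inv [l] @ v"
      using Cons rest l by (simp add: word_inv_def)
    have over: "word_over m [l]" "word_over m u" "word_over m v"
      using less.prems(1) unfolding w word_over_append by simp_all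
    have "exp_sum j (u @ v) = 0" for j
      using less.prems(2)[of j] unfolding w exp_sum_append exp_sum_word_inv by simp
    with over have "free_class u \<otimes>\<^bsub>free_group m\<^esub> free_class v \<in> ?D"
      using less.hyps[of "u @ v"] by (simp add: w mult_free_group word_over_append)
    then have "free_class [l] \<otimes>\<^bsub>free_group m\<^esub> free_class u
        \<otimes>\<^bsub>free_group m\<^esub> inv\<^bsub>free_group m\<^esub> free_class [l]
        \<otimes>\<^bsub>free_group m\<^esub> free_class v \<in> ?D"
      using over by (intro F.conj_mult_in_derived) (simp_all add: free_class_in_carrier)
    then show ?thesis
      using over by (simp add: w inv_free_group mult_free_group)
  qed
qed

lemma word_map_representative:
  assumes "W \<in> carrier (free_group m)"
  shows "\<exists>w. word_over m w \<and> W = free_class w \<and> (\<forall>g. word_map G m W g = eval_word G g w)"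
proof -
  obtain w0 where w0: "word_over m w0" "W = free_class w0"
    using assms unfolding carrier_free_group by auto
  let ?w = "SOME w. w \<in> W \<and> word_over m w"
  have w: "?w \<in> W \<and> word_over m ?w"
    by (rule someI[of _ w0]) (simp add: w0 free_class_self)
  then have "(w0, ?w) \<in> free_equiv"
    using w0(2) by (simp add: free_class_def)
  with w0(2) have "W = free_class ?w"
    by (simp add: free_class_eq)
  with w show ?thesis
    unfolding word_map_def by blast
qed

lemma (in group) eval_word_single_variable:
  assumes "x \<in> carrier G"
  shows "eval_word G (\<lambda>j. if j = i then x else \<one>) w = x [^] exp_sum i w"
proof (induction w rule: exp_sum.induct)
  case (2 i' j b w)
  then show ?case
    using assms int_pow_mult[OF assms, of 1 "exp_sum i' w"]
      int_pow_mult[OF assms, of "-1" "exp_sum i' w"]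
    by (auto simp: int_pow_neg)
qed simp

lemma (in group) Q_group_pw_of_int:
  assumes "Q_group G pw" and "x \<in> carrier G"
  shows "pw x (of_int k) = x [^] k"
proof -
  have add: "pw x (a + b) = pw x a \<otimes> pw x b" for a b
    using assms unfolding Q_group_def by blast
  have "pw x 0 = \<one>" "pw x 1 = x" "pw x (-1) \<in> carrier G"
    using assms unfolding Q_group_def by blast+
  with add[of "-1" 1] have "pw x (-1) = inv x"
    by (simp add: inv_equality assms(2))
  then have step: "pw x (of_int (k + d)) = x [^] (k + d)"
    if "pw x (of_int k) = x [^] k" "d \<in> {1, -1}" for k d
    using that add[of "of_int k" "of_int d"] \<open>pw x 1 = x\<close> assms(2)
    by (auto simp: int_pow_mult int_pow_neg)
  show ?thesis
  proof (induction k rule: int_induct[where k = 0])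
    case base
    then show ?case using \<open>pw x 0 = \<one>\<close> by simp
  next
    case (step1 k)
    then show ?case using step[of k 1] by simp
  next
    case (step2 k)
    then show ?case using step[of k "-1"] by simp
  qed
qed

lemma Q_group_divisible:
  fixes e :: int
  assumes "Q_group G pw" and "h \<in> carrier G" and "e \<noteq> 0"
  shows "\<exists>x\<in>carrier G. x [^]\<^bsub>G\<^esub> e = h"
proof
  let ?x = "pw h (1 / of_int e)"
  show x: "?x \<in> carrier G"
    using assms(1,2) unfolding Q_group_def by blast
  have "?x [^]\<^bsub>G\<^esub> e = pw ?x (of_int e)"
    using group.Q_group_pw_of_int[OF _ assms(1) x] assms(1) unfolding Q_group_def by simp
  also have "\<dots> = pw h (1 / of_int e * of_int e)"
    using assms(1,2) unfolding Q_group_def by blast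
  also have "\<dots> = h"
    using assms unfolding Q_group_def by simp
  finally show "?x [^]\<^bsub>G\<^esub> e = h" .
qed

theorem lemma5p1:
  fixes G :: "('g, 'b) monoid_scheme" and pw :: "'g \<Rightarrow> rat \<Rightarrow> 'g"
    and m :: nat and W :: "letter list set"
  assumes "Q_group G pw"
    and "m \<ge> 1"
    and "W \<in> carrier (free_group m) - derived (free_group m) (carrier (free_group m))"
  shows "\<forall>h\<in>carrier G. \<exists>g. (\<forall>i<m. g i \<in> carrier G) \<and> word_map G m W g = h"
proof
  fix h
  assume h: "h \<in> carrier G"
  interpret group G using assms(1) unfolding Q_group_def by blast
  obtain w where w: "word_over m w" "W = free_class w"
    and map: "\<And>g. word_map G m W g = eval_word G g w"
    using word_map_representative[OF DiffD1[OF assms(3)], where G = G] by blast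
  have "free_class w \<notin> derived (free_group m) (carrier (free_group m))"
    using assms(3) w(2) by simp
  then obtain i where "exp_sum i w \<noteq> 0"
    using free_class_in_derivedI[OF w(1)] by blast
  then obtain x where x: "x \<in> carrier G" "x [^]\<^bsub>G\<^esub> exp_sum i w = h"
    using Q_group_divisible[OF assms(1) h] by blast
  let ?g = "\<lambda>j. if j = i then x else \<one>\<^bsub>G\<^esub>"
  have "word_map G m W ?g = h"
    using map eval_word_single_variable[OF x(1)] x(2) by simp
  moreover have "\<forall>j<m. ?g j \<in> carrier G"
    using x(1) by simp
  ultimately show "\<exists>g. (\<forall>j<m. g j \<in> carrier G) \<and> word_map G m W g = h"
    by (intro exI[of _ ?g] conjI)
qed

end
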